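(* Let $k\ge0$ be an integer. For every $\mathbf{n}=(n_1,\dots,n_d)\in\mathbb{Z}^d$ with $\sum_i n_i=0$ and $\sum_i|n_i|=2t$ for some integer $0\le t\le k$, the function $U\mapsto\sum_{\sigma\in S_d}\exp\!\big(i\sum_{j=1}^d n_{\sigma(j)}\varphi_j\big)$, where $e^{i\varphi_1},\dots,e^{i\varphi_d}$ are the eigenvalues of $U\in\mathrm{U}(d)$, belongs to $\mathcal{H}_k$.
   Context: $\mathcal{H}_k$ is the linear span of the functions $U\mapsto\mathrm{tr}(A\,U^{\otimes s}\otimes\bar U^{\otimes s})$ on $\mathrm{U}(d)$, where $0\le s\le k$ and $A$ is an operator on $(\mathbb{C}^d)^{\otimes 2s}$. $S_d$ is the symmetric group (the function is well-defined since it is symmetric in the eigenphases). *)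

theory Defs
  imports "HOL-Analysis.Analysis" "Jordan_Normal_Form.Matrix" "Jordan_Normal_Form.Determinant"
    "Jordan_Normal_Form.Char_Poly"
begin

definition adj :: "complex mat \<Rightarrow> complex mat" where
  "adj U = mat (dim_col U) (dim_row U) (\<lambda>(i,j). cnj (U $$ (j,i)))"

definition unitary_group :: "nat \<Rightarrow> complex mat set" where
  "unitary_group d = {U \<in> carrier_mat d d. U * adj U = 1\<^sub>m d \<and> adj U * U = 1\<^sub>m d}"

text \<open>Multi-indices of length m with entries in {0..<d}: basis labels of
  the tensor power (C^d)^{\<otimes> m}.\<close>
definition multi_idx :: "nat \<Rightarrow> nat \<Rightarrow> (nat \<Rightarrow> nat) set" where
  "multi_idx d m = PiE {0..<m} (\<lambda>_. {0..<d})"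

text \<open>Matrix entry (J,I) of U^{\<otimes>s} \<otimes> conj(U)^{\<otimes>s} on (C^d)^{\<otimes>2s}.\<close>
definition tensor_entry :: "nat \<Rightarrow> complex mat \<Rightarrow> (nat \<Rightarrow> nat) \<Rightarrow> (nat \<Rightarrow> nat) \<Rightarrow> complex" where
  "tensor_entry s U J I =
     (\<Prod>l<s. U $$ (J l, I l)) * (\<Prod>l\<in>{s..<2 * s}. cnj (U $$ (J l, I l)))"

text \<open>An operator A on (C^d)^{\<otimes>2s} is given by its matrix entries A I J
  (I, J multi-indices); the trace tr(A (U^{\<otimes>s} \<otimes> conj(U)^{\<otimes>s})).\<close>
definition tr_tensor :: "nat \<Rightarrow> nat \<Rightarrow> ((nat \<Rightarrow> nat) \<Rightarrow> (nat \<Rightarrow> nat) \<Rightarrow> complex) \<Rightarrow> complex mat \<Rightarrow> complex" where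
  "tr_tensor d s A U =
     (\<Sum>I\<in>multi_idx d (2 * s). \<Sum>J\<in>multi_idx d (2 * s). A I J * tensor_entry s U J I)"

text \<open>H_k: the complex linear span of the functions U \<mapsto> tr(A U^{\<otimes>s} \<otimes> conj(U)^{\<otimes>s}),
  0 \<le> s \<le> k (functions considered on all matrices; only their restriction to U(d) matters).\<close>
inductive_set H :: "nat \<Rightarrow> nat \<Rightarrow> (complex mat \<Rightarrow> complex) set" for d k where
  gen: "s \<le> k \<Longrightarrow> tr_tensor d s A \<in> H d k"
| zero: "(\<lambda>_. 0) \<in> H d k"
| add: "f \<in> H d k \<Longrightarrow> g \<in> H d k \<Longrightarrow> (\<lambda>U. f U + g U) \<in> H d k"
| smult: "f \<in> H d k \<Longrightarrow> (\<lambda>U. c * f U) \<in> H d k"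

end

(* Write z_j = e^(i phi_j) and n_l = a_l - b_l with a_l, b_l >= 0, so that sum a = sum b = t.
   After summing over the permutations, the target is the augmented monomial symmetric function
   S_m(a, b) = sum over injective f : [m] -> [d] of prod_l z_(f l)^(a_l) conj(z_(f l))^(b_l), for m = d.
   Singling out the last index gives the Newton-type recursion
     S_(m+1) = S_m * p_(a_m, b_m) - sum_(j<m) S_m(exponents j and m merged),
   with the power sums p_(a, b) = sum_y z_y^a conj(z_y)^b, so S_d is a polynomial in power sums of
   total bidegree (t, t). As |z_j| = 1 and U is triangularisable, p_(a, b) = tr(U^a (U^b)^* ),
   a polynomial of bidegree (a, b) in the entries of U and their conjugates; and such a polynomial
   of bidegree (t, t) is a combination of the functions tr(A U^(x)t (x) conj(U)^(x)t). *)

theory Submission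
  imports Defs "Jordan_Normal_Form.Schur_Decomposition" "HOL-Library.Product_Plus"
begin

section \<open>Polynomials in the matrix entries\<close>

definition entry_monomial :: "nat \<Rightarrow> nat \<Rightarrow> (nat \<Rightarrow> nat) \<Rightarrow> (nat \<Rightarrow> nat) \<Rightarrow>
    (nat \<Rightarrow> nat) \<Rightarrow> (nat \<Rightarrow> nat) \<Rightarrow> complex mat \<Rightarrow> complex" where
  "entry_monomial a b r c r' c' U = (\<Prod>l<a. U $$ (r l, c l)) * (\<Prod>l<b. cnj (U $$ (r' l, c' l)))"

inductive_set entry_poly :: "nat \<Rightarrow> nat \<Rightarrow> nat \<Rightarrow> (complex mat \<Rightarrow> complex) set" for d a b where
  monomial: "(\<And>l. l < a \<Longrightarrow> r l < d \<and> c l < d) \<Longrightarrow> (\<And>l. l < b \<Longrightarrow> r' l < d \<and> c' l < d)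
    \<Longrightarrow> entry_monomial a b r c r' c' \<in> entry_poly d a b"
| zero: "(\<lambda>_. 0) \<in> entry_poly d a b"
| add: "f \<in> entry_poly d a b \<Longrightarrow> g \<in> entry_poly d a b \<Longrightarrow> (\<lambda>U. f U + g U) \<in> entry_poly d a b"
| smult: "f \<in> entry_poly d a b \<Longrightarrow> (\<lambda>U. x * f U) \<in> entry_poly d a b"

lemma entry_monomial_mult:
  "entry_monomial a b r c r' c' U * entry_monomial a' b' s e s' e' U =
   entry_monomial (a + a') (b + b')
     (\<lambda>l. if l < a then r l else s (l - a)) (\<lambda>l. if l < a then c l else e (l - a))
     (\<lambda>l. if l < b then r' l else s' (l - b)) (\<lambda>l. if l < b then c' l else e' (l - b)) U"
proof -
  have prod_lessThan_add: "(\<Prod>l<x + y. f l) = (\<Prod>l<x. f l) * (\<Prod>l<y. f (x + l))"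
    for x y and f :: "nat \<Rightarrow> complex"
    by (induction y) (auto simp: mult_ac)
  show ?thesis
    unfolding entry_monomial_def prod_lessThan_add by (simp add: mult_ac)
qed

lemma entry_poly_mult:
  assumes "f \<in> entry_poly d a b" and "g \<in> entry_poly d a' b'"
  shows "(\<lambda>U. f U * g U) \<in> entry_poly d (a + a') (b + b')"
  using assms(1)
proof induct
  case (monomial r c r' c')
  note f_indices = monomial.hyps
  show ?case
    using assms(2)
  proof induct
    case (monomial s e s' e')
    with f_indices show ?case
      unfolding entry_monomial_mult by (intro entry_poly.monomial) auto
  next
    case (smult g x)
    then show ?case
      using entry_poly.smult[of "\<lambda>U. entry_monomial a b r c r' c' U * g U" d _ _ x]
      by (simp add: mult_ac)
  qed (auto simp: distrib_left intro: entry_poly.intros)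
next
  case (smult f x)
  then show ?case
    using entry_poly.smult[of "\<lambda>U. f U * g U" d _ _ x] by (simp add: mult_ac)
qed (auto simp: distrib_right intro: entry_poly.intros)

lemma entry_poly_const: "(\<lambda>_. x) \<in> entry_poly d 0 0"
proof -
  have "entry_monomial 0 0 id id id id \<in> entry_poly d 0 0"
    by (rule entry_poly.monomial) auto
  from entry_poly.smult[OF this, of x] show ?thesis
    by (simp add: entry_monomial_def)
qed

lemma entry_poly_entry:
  assumes "i < d" and "j < d"
  shows "(\<lambda>U. U $$ (i, j)) \<in> entry_poly d 1 0"
proof -
  have "entry_monomial 1 0 (\<lambda>_. i) (\<lambda>_. j) id id \<in> entry_poly d 1 0"
    using assms by (intro entry_poly.monomial) auto
  moreover have "entry_monomial 1 0 (\<lambda>_. i) (\<lambda>_. j) id id = (\<lambda>U. U $$ (i, j))"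
    by (simp add: entry_monomial_def fun_eq_iff lessThan_Suc)
  ultimately show ?thesis
    by simp
qed

lemma entry_poly_sum:
  "finite S \<Longrightarrow> (\<And>i. i \<in> S \<Longrightarrow> F i \<in> entry_poly d a b) \<Longrightarrow> (\<lambda>U. \<Sum>i\<in>S. F i U) \<in> entry_poly d a b"
  by (induction S rule: finite_induct) (auto intro: entry_poly.intros)

lemma entry_poly_cnj: "f \<in> entry_poly d a b \<Longrightarrow> (\<lambda>U. cnj (f U)) \<in> entry_poly d b a"
proof (induction rule: entry_poly.induct)
  case (monomial r c r' c')
  have "(\<lambda>U. cnj (entry_monomial a b r c r' c' U)) = entry_monomial b a r' c' r c"
    by (auto simp: entry_monomial_def mult.commute)
  then show ?case
    using monomial by (auto intro: entry_poly.monomial)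
qed (auto intro: entry_poly.intros)

lemma entry_poly_pow_entries:
  "\<exists>G. \<forall>i<d. \<forall>j<d. G i j \<in> entry_poly d m 0 \<and> (\<forall>U \<in> carrier_mat d d. (U ^\<^sub>m m) $$ (i, j) = G i j U)"
proof (induction m)
  case 0
  show ?case
    by (rule exI[of _ "\<lambda>i j _. if i = j then 1 else 0"]) (auto intro: entry_poly_const)
next
  case (Suc m)
  then obtain G where G: "\<And>i j. i < d \<Longrightarrow> j < d \<Longrightarrow> G i j \<in> entry_poly d m 0"
    and G_eq: "\<And>i j U. i < d \<Longrightarrow> j < d \<Longrightarrow> U \<in> carrier_mat d d \<Longrightarrow> (U ^\<^sub>m m) $$ (i, j) = G i j U"
    by blast
  have "(\<lambda>U. \<Sum>k<d. G i k U * U $$ (k, j)) \<in> entry_poly d (m + 1) (0 + 0)" if "i < d" "j < d" for i j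
    using that by (intro entry_poly_sum entry_poly_mult G entry_poly_entry) auto
  moreover have "(U ^\<^sub>m Suc m) $$ (i, j) = (\<Sum>k<d. G i k U * U $$ (k, j))"
    if "i < d" "j < d" "U \<in> carrier_mat d d" for i j U
    using that G_eq by (auto simp: scalar_prod_def lessThan_atLeast0 intro!: sum.cong)
  ultimately show ?case
    by (intro exI[of _ "\<lambda>i j U. \<Sum>k<d. G i k U * U $$ (k, j)"]) auto
qed

(* undefined beyond 2 t, since the multi-indices in multi_idx are extensional *)
definition idx_append :: "nat \<Rightarrow> (nat \<Rightarrow> nat) \<Rightarrow> (nat \<Rightarrow> nat) \<Rightarrow> nat \<Rightarrow> nat" where
  "idx_append t u v l = (if l < t then u l else if l < 2 * t then v (l - t) else undefined)"

lemma tensor_entry_idx_append: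
  "tensor_entry t U (idx_append t r r') (idx_append t c c') = entry_monomial t t r c r' c' U"
proof -
  have "(\<Prod>l\<in>{t..<2 * t}. cnj (U $$ (idx_append t r r' l, idx_append t c c' l)))
      = (\<Prod>l\<in>{0 + t..<t + t}. cnj (U $$ (idx_append t r r' l, idx_append t c c' l)))"
    by (simp add: mult_2)
  also have "\<dots> = (\<Prod>l<t. cnj (U $$ (r' l, c' l)))"
    unfolding prod.shift_bounds_nat_ivl by (auto simp: idx_append_def atLeast0LessThan intro!: prod.cong)
  finally show ?thesis
    by (simp add: tensor_entry_def entry_monomial_def idx_append_def)
qed

lemma entry_poly_in_H:
  assumes "f \<in> entry_poly d t t" and "t \<le> k"
  shows "f \<in> H d k"
  using assms(1)
proof induct
  case (monomial r c r' c')
  define J I where "J = idx_append t r r'" and "I = idx_append t c c'"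
  have IJ: "I \<in> multi_idx d (2 * t)" "J \<in> multi_idx d (2 * t)"
    using monomial by (auto simp: multi_idx_def I_def J_def idx_append_def)
  define A where "A I' J' = (of_bool (I' = I \<and> J' = J) :: complex)" for I' J'
  have "tr_tensor d t A U = entry_monomial t t r c r' c' U" for U
  proof -
    have "tr_tensor d t A U = tensor_entry t U J I"
      using IJ by (simp add: tr_tensor_def A_def multi_idx_def finite_PiE of_bool_conj
          sum_distrib_left[symmetric] mult.assoc)
    also have "\<dots> = entry_monomial t t r c r' c' U"
      unfolding I_def J_def by (rule tensor_entry_idx_append)
    finally show ?thesis .
  qed
  then have "tr_tensor d t A = entry_monomial t t r c r' c'" ..
  then show ?case
    using H.gen[OF assms(2), of d A] by simp
qed (auto intro: H.intros)

section \<open>Traces of powers of unitary matrices\<close>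

definition mat_trace :: "'a::semiring_0 mat \<Rightarrow> 'a" where
  "mat_trace A = (\<Sum>i<dim_row A. A $$ (i, i))"

lemma mat_trace_mult_comm:
  fixes A B :: "'a::comm_semiring_0 mat"
  assumes "A \<in> carrier_mat n m" and "B \<in> carrier_mat m n"
  shows "mat_trace (A * B) = mat_trace (B * A)"
proof -
  have "mat_trace (A * B) = (\<Sum>i<n. \<Sum>k<m. A $$ (i, k) * B $$ (k, i))"
    using assms by (auto simp: mat_trace_def scalar_prod_def lessThan_atLeast0 intro!: sum.cong)
  also have "\<dots> = (\<Sum>k<m. \<Sum>i<n. B $$ (k, i) * A $$ (i, k))"
    by (subst sum.swap) (simp add: mult.commute)
  also have "\<dots> = mat_trace (B * A)"
    using assms by (auto simp: mat_trace_def scalar_prod_def lessThan_atLeast0 intro!: sum.cong)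
  finally show ?thesis .
qed

lemma adj_carrier: "U \<in> carrier_mat n m \<Longrightarrow> adj U \<in> carrier_mat m n"
  by (auto simp: adj_def)

lemma adj_mult:
  assumes "A \<in> carrier_mat n n" "B \<in> carrier_mat n n"
  shows "adj (A * B) = adj B * adj A"
  by (rule eq_matI) (use assms in \<open>auto simp: adj_def scalar_prod_def mult.commute\<close>)

lemma mat_trace_adj: "A \<in> carrier_mat n n \<Longrightarrow> mat_trace (adj A) = cnj (mat_trace A)"
  by (simp add: mat_trace_def adj_def)

lemma pow_mat_add:
  assumes "A \<in> carrier_mat n n"
  shows "A ^\<^sub>m (x + y) = A ^\<^sub>m x * A ^\<^sub>m y"
proof (induction y)
  case (Suc y)
  then show ?case
    using assms by (simp add: assoc_mult_mat[of _ n n _ n _ n])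
qed (use assms in simp)

lemma entry_poly_trace_pow_mult_adj_pow:
  "\<exists>g \<in> entry_poly d a b. \<forall>U \<in> carrier_mat d d. g U = mat_trace (U ^\<^sub>m a * adj (U ^\<^sub>m b))"
proof -
  obtain Ga Gb where
    Ga: "\<And>i j. i < d \<Longrightarrow> j < d \<Longrightarrow> Ga i j \<in> entry_poly d a 0 \<and> (\<forall>U \<in> carrier_mat d d. (U ^\<^sub>m a) $$ (i, j) = Ga i j U)" and
    Gb: "\<And>i j. i < d \<Longrightarrow> j < d \<Longrightarrow> Gb i j \<in> entry_poly d b 0 \<and> (\<forall>U \<in> carrier_mat d d. (U ^\<^sub>m b) $$ (i, j) = Gb i j U)"
    using entry_poly_pow_entries[of d a] entry_poly_pow_entries[of d b] by metis
  define g where "g U = (\<Sum>i<d. \<Sum>j<d. Ga i j U * cnj (Gb i j U))" for U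
  have "g \<in> entry_poly d (a + 0) (0 + b)"
    unfolding g_def using Ga Gb by (intro entry_poly_sum entry_poly_mult entry_poly_cnj) auto
  moreover have "g U = mat_trace (U ^\<^sub>m a * adj (U ^\<^sub>m b))" if "U \<in> carrier_mat d d" for U
    using that Ga Gb
    by (auto simp: g_def mat_trace_def scalar_prod_def adj_def lessThan_atLeast0 intro!: sum.cong)
  ultimately show ?thesis
    by auto
qed

lemma upper_triangular_mult_entry:
  fixes B C :: "'a::semiring_0 mat"
  assumes "B \<in> carrier_mat n n" "C \<in> carrier_mat n n"
    and "upper_triangular B" "upper_triangular C" and "i < n" "j \<le> i"
  shows "(B * C) $$ (i, j) = (if i = j then B $$ (i, i) * C $$ (i, i) else 0)"
proof -
  have "(B * C) $$ (i, j) = (\<Sum>k<n. B $$ (i, k) * C $$ (k, j))"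
    using assms by (auto simp: scalar_prod_def lessThan_atLeast0 intro!: sum.cong)
  also have "\<dots> = (\<Sum>k<n. if k = i then (if i = j then B $$ (i, i) * C $$ (i, i) else 0) else 0)"
  proof (intro sum.cong refl)
    fix k
    have "B $$ (i, k) = 0" if "k < i"
      using upper_triangularD[OF assms(3) that] assms by simp
    moreover have "C $$ (k, j) = 0" if "j < k" "k < n"
      using upper_triangularD[OF assms(4) that(1)] assms that by simp
    moreover assume "k \<in> {..<n}"
    ultimately show "B $$ (i, k) * C $$ (k, j) = (if k = i then (if i = j then B $$ (i, i) * C $$ (i, i) else 0) else 0)"
      using \<open>j \<le> i\<close> by (cases k i rule: linorder_cases) auto
  qed
  finally show ?thesis
    using assms by simp
qed

lemma upper_triangular_pow:
  fixes B :: "'a::comm_semiring_1 mat"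
  assumes "B \<in> carrier_mat n n" and "upper_triangular B"
  shows "upper_triangular (B ^\<^sub>m m) \<and> (\<forall>i<n. (B ^\<^sub>m m) $$ (i, i) = B $$ (i, i) ^ m)"
proof (induction m)
  case (Suc m)
  have "B ^\<^sub>m m \<in> carrier_mat n n"
    using assms by simp
  with Suc assms show ?case
    using upper_triangular_mult_entry[of "B ^\<^sub>m m" n B] by (auto simp: mult.commute)
qed (use assms in auto)

lemma mat_trace_pow:
  fixes U :: "complex mat" and z :: "nat \<Rightarrow> complex"
  assumes U: "U \<in> carrier_mat d d" and "char_poly U = (\<Prod>j<d. [:- z j, 1:])"
  shows "mat_trace (U ^\<^sub>m m) = (\<Sum>j<d. z j ^ m)"
proof -
  define es where "es = map z [0..<d]"
  have "char_poly U = (\<Prod>e\<leftarrow>es. [:- e, 1:])"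
    using assms(2) by (simp add: es_def prod.distinct_set_conv_list[symmetric] lessThan_atLeast0 comp_def)
  moreover obtain B P Q where "schur_decomposition U es = (B, P, Q)"
    by (cases "schur_decomposition U es")
  ultimately have wit: "similar_mat_wit U B P Q" and "upper_triangular B" and "diag_mat B = es"
    using schur_decomposition[OF U] by blast+
  then have B: "B \<in> carrier_mat d d" and P: "P \<in> carrier_mat d d" and Q: "Q \<in> carrier_mat d d"
    and "Q * P = 1\<^sub>m d"
    using U by (auto simp: similar_mat_wit_def Let_def)
  have Bm: "B ^\<^sub>m m \<in> carrier_mat d d"
    using B by simp
  have "mat_trace (U ^\<^sub>m m) = mat_trace (P * B ^\<^sub>m m * Q)"
    by (simp add: similar_mat_wit_pow_id[OF wit])
  also have "\<dots> = mat_trace (Q * (P * B ^\<^sub>m m))"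
    using P Q Bm by (intro mat_trace_mult_comm) auto
  also have "Q * (P * B ^\<^sub>m m) = B ^\<^sub>m m"
    using P Q Bm \<open>Q * P = 1\<^sub>m d\<close> by (simp add: left_mult_one_mat[OF Bm] flip: assoc_mult_mat[of Q d d P d _ d])
  also have "mat_trace (B ^\<^sub>m m) = (\<Sum>i<d. B $$ (i, i) ^ m)"
    using upper_triangular_pow[OF B \<open>upper_triangular B\<close>] B by (simp add: mat_trace_def)
  also have "\<dots> = (\<Sum>j<d. z j ^ m)"
  proof (intro sum.cong refl)
    fix i
    assume "i \<in> {..<d}"
    then show "B $$ (i, i) ^ m = z i ^ m"
      using arg_cong[OF \<open>diag_mat B = es\<close>, of "\<lambda>xs. xs ! i"] B by (simp add: diag_mat_def es_def)
  qed
  finally show ?thesis .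
qed

lemma unitary_pow_mult_adj:
  assumes "U \<in> unitary_group d"
  shows "U ^\<^sub>m m * adj (U ^\<^sub>m m) = 1\<^sub>m d"
proof (induction m)
  case 0
  show ?case
    using assms by (auto simp: unitary_group_def adj_def)
next
  case (Suc m)
  have U: "U \<in> carrier_mat d d" and "U * adj U = 1\<^sub>m d"
    using assms by (auto simp: unitary_group_def)
  have c: "U ^\<^sub>m m \<in> carrier_mat d d" "adj U \<in> carrier_mat d d" "adj (U ^\<^sub>m m) \<in> carrier_mat d d"
    using U by (auto intro: adj_carrier)
  have "U ^\<^sub>m Suc m * adj (U ^\<^sub>m Suc m) = U ^\<^sub>m m * ((U * adj U) * adj (U ^\<^sub>m m))"
    using c U by (simp add: adj_mult[OF c(1) U] assoc_mult_mat[of _ d d _ d _ d])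
  also have "\<dots> = 1\<^sub>m d"
    using c Suc \<open>U * adj U = 1\<^sub>m d\<close> by simp
  finally show ?case .
qed

lemma unitary_pow_mult_adj_pow:
  assumes "U \<in> unitary_group d"
  shows "U ^\<^sub>m a * adj (U ^\<^sub>m b) = (if b \<le> a then U ^\<^sub>m (a - b) else adj (U ^\<^sub>m (b - a)))"
proof -
  have U: "U \<in> carrier_mat d d"
    using assms by (simp add: unitary_group_def)
  show ?thesis
  proof (cases "b \<le> a")
    case True
    then have "U ^\<^sub>m a * adj (U ^\<^sub>m b) = U ^\<^sub>m (a - b) * (U ^\<^sub>m b * adj (U ^\<^sub>m b))"
      using U pow_mat_add[OF U, of "a - b" b] by (simp add: assoc_mult_mat[of _ d d _ d _ d] adj_carrier)
    then show ?thesis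
      using True U unitary_pow_mult_adj[OF assms] by simp
  next
    case False
    then have "U ^\<^sub>m a * adj (U ^\<^sub>m b) = (U ^\<^sub>m a * adj (U ^\<^sub>m a)) * adj (U ^\<^sub>m (b - a))"
      using U pow_mat_add[OF U, of "b - a" a] adj_mult[of "U ^\<^sub>m (b - a)" d "U ^\<^sub>m a"]
      by (simp add: adj_carrier assoc_mult_mat[of _ d d _ d _ d])
    then show ?thesis
      using False U unitary_pow_mult_adj[OF assms] by (simp add: adj_carrier left_mult_one_mat[of _ d d])
  qed
qed

section \<open>Polynomial functions of the eigenphases\<close>

abbreviation has_eigenphases :: "nat \<Rightarrow> complex mat \<Rightarrow> (nat \<Rightarrow> real) \<Rightarrow> bool" where
  "has_eigenphases d U \<phi> \<equiv> char_poly U = (\<Prod>j<d. [:- cis (\<phi> j), 1:])"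

definition phase_monomial :: "nat \<times> nat \<Rightarrow> (nat \<Rightarrow> real) \<Rightarrow> nat \<Rightarrow> complex" where
  "phase_monomial e \<phi> y = cis (\<phi> y) ^ fst e * cnj (cis (\<phi> y)) ^ snd e"

lemma phase_monomial_add: "phase_monomial (e + e') \<phi> y = phase_monomial e \<phi> y * phase_monomial e' \<phi> y"
  by (simp add: phase_monomial_def power_add mult_ac)

lemma phase_monomial_Pair:
  "phase_monomial (a, b) \<phi> y = (if b \<le> a then cis (\<phi> y) ^ (a - b) else cnj (cis (\<phi> y) ^ (b - a)))"
proof -
  define z where "z = cis (\<phi> y)"
  have unit: "z * cnj z = 1"
    by (simp add: z_def cis_cnj cis_mult)
  show ?thesis
  proof (cases "b \<le> a")
    case True
    then obtain c where "a = b + c"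
      using le_Suc_ex by blast
    then have "z ^ a * cnj z ^ b = (z * cnj z) ^ b * z ^ c"
      by (simp add: power_add power_mult_distrib mult_ac)
    then show ?thesis
      using True unit \<open>a = b + c\<close> by (simp add: phase_monomial_def z_def)
  next
    case False
    then obtain c where "b = a + c"
      using le_Suc_ex nat_le_linear by blast
    then have "z ^ a * cnj z ^ b = (z * cnj z) ^ a * cnj (z ^ c)"
      by (simp add: power_add power_mult_distrib mult_ac)
    then show ?thesis
      using False unit \<open>b = a + c\<close> by (simp add: phase_monomial_def z_def)
  qed
qed

lemma exp_of_int_eq_phase_monomial:
  "exp (\<i> * of_real (of_int k * \<phi> y)) = phase_monomial (nat k, nat (- k)) \<phi> y"
proof -
  have "exp (\<i> * of_real (of_int k * \<phi> y)) = cis (of_int k * \<phi> y)"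
    by (simp add: cis_conv_exp)
  also have "\<dots> = phase_monomial (nat k, nat (- k)) \<phi> y"
  proof (cases "k \<ge> 0")
    case True
    then have "cis (of_int k * \<phi> y) = cis (\<phi> y) ^ nat k"
      by (simp add: Complex.DeMoivre)
    with True show ?thesis
      by (simp add: phase_monomial_Pair)
  next
    case False
    then have "cis (of_int k * \<phi> y) = cnj (cis (\<phi> y) ^ nat (- k))"
      by (simp add: Complex.DeMoivre cis_cnj)
    with False show ?thesis
      by (simp add: phase_monomial_Pair)
  qed
  finally show ?thesis .
qed

definition power_sum :: "nat \<Rightarrow> nat \<times> nat \<Rightarrow> (nat \<Rightarrow> real) \<Rightarrow> complex" where
  "power_sum d e \<phi> = (\<Sum>y<d. phase_monomial e \<phi> y)"

lemma unitary_trace_pow_mult_adj_pow: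
  assumes "U \<in> unitary_group d" and "has_eigenphases d U \<phi>"
  shows "mat_trace (U ^\<^sub>m a * adj (U ^\<^sub>m b)) = power_sum d (a, b) \<phi>"
proof -
  have U: "U \<in> carrier_mat d d"
    using assms(1) by (simp add: unitary_group_def)
  show ?thesis
    using unitary_pow_mult_adj_pow[OF assms(1), of a b] mat_trace_pow[OF U assms(2)]
      mat_trace_adj[of "U ^\<^sub>m (b - a)" d] U
    by (simp add: power_sum_def phase_monomial_Pair)
qed

definition spectral_poly :: "nat \<Rightarrow> nat \<times> nat \<Rightarrow> ((nat \<Rightarrow> real) \<Rightarrow> complex) set" where
  "spectral_poly d e = {h. \<exists>g \<in> entry_poly d (fst e) (snd e).
     \<forall>U \<in> unitary_group d. \<forall>\<phi>. has_eigenphases d U \<phi> \<longrightarrow> g U = h \<phi>}"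

lemma power_sum_spectral_poly: "power_sum d e \<in> spectral_poly d e"
proof -
  obtain g where "g \<in> entry_poly d (fst e) (snd e)"
    and g_trace: "\<forall>U \<in> carrier_mat d d. g U = mat_trace (U ^\<^sub>m fst e * adj (U ^\<^sub>m snd e))"
    using entry_poly_trace_pow_mult_adj_pow by blast
  moreover have "g U = power_sum d e \<phi>" if "U \<in> unitary_group d" "has_eigenphases d U \<phi>" for U \<phi>
    using that g_trace unitary_trace_pow_mult_adj_pow[OF that, of "fst e" "snd e"]
    by (simp add: unitary_group_def)
  ultimately show ?thesis
    unfolding spectral_poly_def by blast
qed

lemma spectral_poly_const: "(\<lambda>_. x) \<in> spectral_poly d 0"
  using entry_poly_const by (fastforce simp: spectral_poly_def)

lemma spectral_poly_add:
  assumes "f \<in> spectral_poly d e" and "g \<in> spectral_poly d e"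
  shows "(\<lambda>\<phi>. f \<phi> + g \<phi>) \<in> spectral_poly d e"
proof -
  from assms obtain F G where "F \<in> entry_poly d (fst e) (snd e)" "G \<in> entry_poly d (fst e) (snd e)"
    and "\<forall>U \<in> unitary_group d. \<forall>\<phi>. has_eigenphases d U \<phi> \<longrightarrow> F U = f \<phi> \<and> G U = g \<phi>"
    unfolding spectral_poly_def by blast
  then show ?thesis
    unfolding spectral_poly_def by (intro CollectI bexI[of _ "\<lambda>U. F U + G U"] entry_poly.add) auto
qed

lemma spectral_poly_smult:
  assumes "f \<in> spectral_poly d e"
  shows "(\<lambda>\<phi>. x * f \<phi>) \<in> spectral_poly d e"
proof -
  from assms obtain F where "F \<in> entry_poly d (fst e) (snd e)"
    and "\<forall>U \<in> unitary_group d. \<forall>\<phi>. has_eigenphases d U \<phi> \<longrightarrow> F U = f \<phi>"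
    unfolding spectral_poly_def by blast
  then show ?thesis
    unfolding spectral_poly_def by (intro CollectI bexI[of _ "\<lambda>U. x * F U"] entry_poly.smult) auto
qed

lemma spectral_poly_diff:
  "f \<in> spectral_poly d e \<Longrightarrow> g \<in> spectral_poly d e \<Longrightarrow> (\<lambda>\<phi>. f \<phi> - g \<phi>) \<in> spectral_poly d e"
  using spectral_poly_add[of f d e "\<lambda>\<phi>. (- 1) * g \<phi>"] spectral_poly_smult[of g d e "- 1"] by simp

lemma spectral_poly_sum:
  "finite S \<Longrightarrow> (\<And>i. i \<in> S \<Longrightarrow> F i \<in> spectral_poly d e) \<Longrightarrow> (\<lambda>\<phi>. \<Sum>i\<in>S. F i \<phi>) \<in> spectral_poly d e"
proof (induction S rule: finite_induct)
  case empty
  show ?case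
    using entry_poly.zero by (fastforce simp: spectral_poly_def)
next
  case (insert x S)
  then show ?case
    using spectral_poly_add[of "F x" d e] by simp
qed

lemma spectral_poly_mult:
  assumes "f \<in> spectral_poly d e" and "g \<in> spectral_poly d e'"
  shows "(\<lambda>\<phi>. f \<phi> * g \<phi>) \<in> spectral_poly d (e + e')"
proof -
  from assms obtain F G where "F \<in> entry_poly d (fst e) (snd e)" "G \<in> entry_poly d (fst e') (snd e')"
    and "\<forall>U \<in> unitary_group d. \<forall>\<phi>. has_eigenphases d U \<phi> \<longrightarrow> F U = f \<phi> \<and> G U = g \<phi>"
    unfolding spectral_poly_def by blast
  then show ?thesis
    unfolding spectral_poly_def
    by (intro CollectI bexI[of _ "\<lambda>U. F U * G U"]) (auto intro: entry_poly_mult)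
qed

section \<open>Augmented monomial symmetric functions\<close>

lemma sum_diff_image:
  fixes g :: "'a \<Rightarrow> 'c::ab_group_add"
  assumes "finite A" and "inj_on f B" and "f ` B \<subseteq> A"
  shows "sum g (A - f ` B) = sum g A - sum (g \<circ> f) B"
  using assms by (simp add: sum_diff finite_subset sum.reindex)

lemma sum_fun_upd_add:
  fixes e :: "'a \<Rightarrow> 'b::comm_monoid_add"
  assumes "finite A" and "j \<in> A"
  shows "sum (e(j := e j + x)) A = sum e A + x"
  using assms by (simp add: sum.remove[of A j] sum.cong[of "A - {j}" _ "e(j := e j + x)" e] add_ac)

definition injections :: "nat \<Rightarrow> nat \<Rightarrow> (nat \<Rightarrow> nat) set" where
  "injections d m = {f. inj_on f {..<m} \<and> f ` {..<m} \<subseteq> {..<d} \<and> (\<forall>i\<ge>m. f i = i)}"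

lemma finite_injections: "finite (injections d m)"
proof -
  have "injections d m \<subseteq> (\<lambda>g i. if i < m then g i else i) ` ({..<m} \<rightarrow>\<^sub>E {..<d})"
  proof
    fix f
    assume "f \<in> injections d m"
    then show "f \<in> (\<lambda>g i. if i < m then g i else i) ` ({..<m} \<rightarrow>\<^sub>E {..<d})"
      by (intro image_eqI[of _ _ "restrict f {..<m}"]) (auto simp: injections_def fun_eq_iff)
  qed
  then show ?thesis
    by (rule finite_subset) (simp add: finite_PiE)
qed

lemma injections_0: "injections d 0 = {id}"
  by (auto simp: injections_def)

lemma injections_self: "injections d d = {\<sigma>. \<sigma> permutes {..<d}}"
proof safe
  fix f
  assume "f \<in> injections d d"
  then have "inj_on f {..<d}" "f ` {..<d} \<subseteq> {..<d}" "\<And>i. d \<le> i \<Longrightarrow> f i = i"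
    by (auto simp: injections_def)
  moreover from this have "f ` {..<d} = {..<d}"
    by (intro endo_inj_surj) auto
  ultimately show "f permutes {..<d}"
    by (intro bij_imp_permutes) (auto simp: bij_betw_def)
next
  fix f
  assume "f permutes {..<d}"
  then show "f \<in> injections d d"
    using permutes_inj_on[of f "{..<d}"] permutes_image[of f "{..<d}"] permutes_not_in[of f "{..<d}"]
    by (auto simp: injections_def)
qed

lemma bij_betw_injections_Suc:
  "bij_betw (\<lambda>(f, y). f(m := y)) (SIGMA f:injections d m. {..<d} - f ` {..<m}) (injections d (Suc m))"
  by (rule bij_betw_byWitness[where f' = "\<lambda>f. (f(m := m), f m)"])
    (auto simp: injections_def fun_eq_iff lessThan_Suc inj_on_def)

definition aug_monomial :: "nat \<Rightarrow> nat \<Rightarrow> (nat \<Rightarrow> nat \<times> nat) \<Rightarrow> (nat \<Rightarrow> real) \<Rightarrow> complex" where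
  "aug_monomial d m e \<phi> = (\<Sum>f\<in>injections d m. \<Prod>l<m. phase_monomial (e l) \<phi> (f l))"

lemma prod_phase_monomial_merge:
  fixes j m :: nat
  assumes "j < m"
  shows "(\<Prod>l<m. phase_monomial ((e(j := e j + x)) l) \<phi> (f l))
    = (\<Prod>l<m. phase_monomial (e l) \<phi> (f l)) * phase_monomial x \<phi> (f j)"
proof -
  have "(\<Prod>l<m. phase_monomial ((e(j := e j + x)) l) \<phi> (f l))
      = (\<Prod>l<m. phase_monomial (e l) \<phi> (f l) * (if l = j then phase_monomial x \<phi> (f l) else 1))"
    by (intro prod.cong) (auto simp: phase_monomial_add)
  also have "\<dots> = (\<Prod>l<m. phase_monomial (e l) \<phi> (f l)) * (\<Prod>l<m. if l = j then phase_monomial x \<phi> (f l) else 1)"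
    by (rule prod.distrib)
  also have "(\<Prod>l<m. if l = j then phase_monomial x \<phi> (f l) else 1) = phase_monomial x \<phi> (f j)"
    using assms by (simp add: prod.delta)
  finally show ?thesis .
qed

lemma aug_monomial_Suc:
  "aug_monomial d (Suc m) e \<phi> = aug_monomial d m e \<phi> * power_sum d (e m) \<phi>
     - (\<Sum>j<m. aug_monomial d m (e(j := e j + e m)) \<phi>)"
proof -
  define W where "W f = (\<Prod>l<m. phase_monomial (e l) \<phi> (f l))" for f
  define g where "g = phase_monomial (e m) \<phi>"
  have "aug_monomial d (Suc m) e \<phi> = (\<Sum>f\<in>injections d (Suc m). W f * g (f m))"
    by (simp add: aug_monomial_def W_def g_def)
  also have "\<dots> = (\<Sum>(f, y)\<in>(SIGMA f:injections d m. {..<d} - f ` {..<m}). W (f(m := y)) * g y)"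
    by (simp add: sum.reindex_bij_betw[OF bij_betw_injections_Suc, symmetric] case_prod_unfold)
  also have "\<dots> = (\<Sum>f\<in>injections d m. \<Sum>y\<in>{..<d} - f ` {..<m}. W f * g y)"
    by (simp add: sum.Sigma[symmetric] finite_injections W_def)
  \<comment> \<open>the values y = f j excluded for the new index are where exponent m merges into exponent j\<close>
  also have "\<dots> = (\<Sum>f\<in>injections d m. W f * power_sum d (e m) \<phi> - (\<Sum>j<m. W f * g (f j)))"
    by (intro sum.cong refl)
      (auto simp: injections_def sum_diff_image power_sum_def g_def sum_distrib_left[symmetric] right_diff_distrib)
  also have "\<dots> = aug_monomial d m e \<phi> * power_sum d (e m) \<phi> - (\<Sum>j<m. \<Sum>f\<in>injections d m. W f * g (f j))"
    by (simp add: sum_subtractf sum_distrib_right aug_monomial_def W_def sum.swap[of _ "{..<m}"])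
  also have "(\<Sum>j<m. \<Sum>f\<in>injections d m. W f * g (f j)) = (\<Sum>j<m. aug_monomial d m (e(j := e j + e m)) \<phi>)"
    unfolding aug_monomial_def W_def g_def
    by (intro sum.cong refl) (simp add: prod_phase_monomial_merge[symmetric] del: fun_upd_apply)
  finally show ?thesis .
qed

lemma aug_monomial_spectral_poly: "aug_monomial d m e \<in> spectral_poly d (\<Sum>l<m. e l)"
proof (induction m arbitrary: e)
  case 0
  show ?case
    using spectral_poly_const[of 1 d] by (simp add: aug_monomial_def injections_0)
next
  case (Suc m)
  have "(\<lambda>\<phi>. aug_monomial d m e \<phi> * power_sum d (e m) \<phi>) \<in> spectral_poly d (\<Sum>l<Suc m. e l)"
    using spectral_poly_mult[OF Suc.IH power_sum_spectral_poly] by simp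
  moreover have "(\<lambda>\<phi>. \<Sum>j<m. aug_monomial d m (e(j := e j + e m)) \<phi>) \<in> spectral_poly d (\<Sum>l<Suc m. e l)"
  proof (intro spectral_poly_sum)
    fix j
    assume "j \<in> {..<m}"
    then show "aug_monomial d m (e(j := e j + e m)) \<in> spectral_poly d (\<Sum>l<Suc m. e l)"
      using Suc.IH[of "e(j := e j + e m)"] by (simp add: sum_fun_upd_add del: fun_upd_apply)
  qed simp
  ultimately show ?case
    using spectral_poly_diff by (simp add: aug_monomial_Suc[abs_def])
qed

lemma sum_permutes_exp_eq_aug_monomial:
  fixes n :: "nat \<Rightarrow> int"
  shows "(\<Sum>\<sigma> | \<sigma> permutes {..<d}. exp (\<i> * of_real (\<Sum>j<d. of_int (n (\<sigma> j)) * \<phi> j)))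
    = aug_monomial d d (\<lambda>l. (nat (n l), nat (- n l))) \<phi>"
proof -
  define F where "F l y = phase_monomial (nat (n l), nat (- n l)) \<phi> y" for l y
  have "(\<Sum>\<sigma> | \<sigma> permutes {..<d}. exp (\<i> * of_real (\<Sum>j<d. of_int (n (\<sigma> j)) * \<phi> j)))
      = (\<Sum>\<sigma> | \<sigma> permutes {..<d}. \<Prod>j<d. F (\<sigma> j) j)"
    by (simp add: F_def sum_distrib_left exp_sum flip: exp_of_int_eq_phase_monomial)
  also have "\<dots> = (\<Sum>\<sigma> | \<sigma> permutes {..<d}. \<Prod>l<d. F l (inv_into UNIV \<sigma> l))"
    by (intro sum.cong refl) (simp add: prod.permutes_inv)
  also have "\<dots> = (\<Sum>\<tau> | \<tau> permutes {..<d}. \<Prod>l<d. F l (\<tau> l))"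
    by (rule sum.reindex_bij_witness[of _ "inv_into UNIV" "inv_into UNIV"]) (auto simp: permutes_inv_inv permutes_inv)
  also have "\<dots> = aug_monomial d d (\<lambda>l. (nat (n l), nat (- n l))) \<phi>"
    by (simp add: aug_monomial_def injections_self F_def)
  finally show ?thesis .
qed

lemma sum_pos_neg_parts:
  fixes n :: "'a \<Rightarrow> int"
  assumes "(\<Sum>i\<in>A. n i) = 0" and "(\<Sum>i\<in>A. \<bar>n i\<bar>) = 2 * int t"
  shows "(\<Sum>i\<in>A. (nat (n i), nat (- n i))) = (t, t)"
proof -
  have "(\<Sum>i\<in>A. int (nat (n i))) - (\<Sum>i\<in>A. int (nat (- n i))) = (\<Sum>i\<in>A. n i)"
    unfolding sum_subtractf[symmetric] by (rule sum.cong) auto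
  moreover have "(\<Sum>i\<in>A. int (nat (n i))) + (\<Sum>i\<in>A. int (nat (- n i))) = (\<Sum>i\<in>A. \<bar>n i\<bar>)"
    unfolding sum.distrib[symmetric] by (rule sum.cong) auto
  ultimately have "int (\<Sum>i\<in>A. nat (n i)) = int t \<and> int (\<Sum>i\<in>A. nat (- n i)) = int t"
    using assms unfolding of_nat_sum by linarith
  then show ?thesis
    by (simp only: of_nat_eq_iff sum_prod)
qed

theorem lemma14:
  fixes d k t :: nat and n :: "nat \<Rightarrow> int"
  assumes "(\<Sum>i<d. n i) = 0"
    and "(\<Sum>i<d. \<bar>n i\<bar>) = 2 * int t"
    and "t \<le> k"
  shows "\<exists>f \<in> H d k. \<forall>U \<in> unitary_group d. \<forall>\<phi> :: nat \<Rightarrow> real.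
           char_poly U = (\<Prod>j<d. [:- cis (\<phi> j), 1:]) \<longrightarrow>
           f U = (\<Sum>\<sigma> | \<sigma> permutes {..<d}. exp (\<i> * of_real (\<Sum>j<d. real_of_int (n (\<sigma> j)) * \<phi> j)))"
proof -
  have "aug_monomial d d (\<lambda>l. (nat (n l), nat (- n l))) \<in> spectral_poly d (t, t)"
    using aug_monomial_spectral_poly sum_pos_neg_parts[OF assms(1,2)] by metis
  then obtain g where "g \<in> entry_poly d t t"
    and "\<forall>U \<in> unitary_group d. \<forall>\<phi>. has_eigenphases d U \<phi> \<longrightarrow>
           g U = aug_monomial d d (\<lambda>l. (nat (n l), nat (- n l))) \<phi>"
    by (auto simp: spectral_poly_def)
  with entry_poly_in_H[OF _ assms(3)] show ?thesis
    unfolding sum_permutes_exp_eq_aug_monomial by blast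
qed

end
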